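(* Let $\Phi=B_l$ or $C_l$ with $l\ge2$. There exist fields $K\subseteq F$ of characteristic $2$, with $F$ a finite (hence algebraic) extension of the nonperfect field $K$, and an admissible pair $(\Lambda_l,\Lambda_s)=(Q,P)$ of type $\Phi$ in $F$ with $K\subseteq Q\subseteq P\subseteq F$, such that: (1) if $\Phi=B_l$, $l\ge3$, then $P$ is not a field; (2) if $\Phi=C_l$, $l\ge3$, then $Q$ is not a field; (3) if $\Phi=B_2=C_2$, then neither $P$ nor $Q$ is a field.
   Context: Let $p=2$ for $\Phi=B_l,C_l$. An admissible pair of type $\Phi$ in a ring $R$ is a pair $\Lambda=(\Lambda_l,\Lambda_s)$ of additive subgroups of $R$ with: (AP1) $p\Lambda_s\subseteq\Lambda_l\subseteq\Lambda_s$; (AP2) $t^p\Lambda_l\subseteq\Lambda_l$ for all $t\in\Lambda_s$; (AP3) $\Lambda_s$ is a subring if $\Phi\ne B_l$; (AP4) $\Lambda_l$ is a subring if $\Phi\ne C_l$; and moreover $\Lambda_l\Lambda_s\subseteq\Lambda_s$. For $\Phi=B_2=C_2$ neither $\Lambda_l$ nor $\Lambda_s$ is required to be a subring. *)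

theory Defs
  imports "HOL-Algebra.Algebra"
begin

datatype root_type = B | C

text \<open>The prime p attached to the doubly laced types B_l, C_l is 2.
  For a subset A of a ring R, p A is the set of all elements p t (t in A),
  where p t = t + t computed in R.\<close>
definition pmult_set :: "('a, 'b) ring_scheme \<Rightarrow> 'a set \<Rightarrow> 'a set" where
  "pmult_set R A = {t \<oplus>\<^bsub>R\<^esub> t | t. t \<in> A}"

text \<open>Admissible pair (Lambda_l, Lambda_s) of type Phi = (Phi, l) in the ring R, with p = 2.
  Conditions AP3 / AP4 apply only for rank l >= 3 (for B_2 = C_2 neither set has to be a subring).\<close>
definition admissible_pair ::
  "root_type \<Rightarrow> nat \<Rightarrow> ('a, 'b) ring_scheme \<Rightarrow> 'a set \<Rightarrow> 'a set \<Rightarrow> bool" where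
  "admissible_pair Phi l R Ll Ls \<longleftrightarrow>
     additive_subgroup Ll R \<and> additive_subgroup Ls R \<and>
     pmult_set R Ls \<subseteq> Ll \<and> Ll \<subseteq> Ls \<and>                                   \<comment> \<open>AP1\<close>
     (\<forall>t\<in>Ls. \<forall>x\<in>Ll. (t [^]\<^bsub>R\<^esub> (2::nat)) \<otimes>\<^bsub>R\<^esub> x \<in> Ll) \<and>            \<comment> \<open>AP2\<close>
     (\<not> (Phi = B \<or> l = 2) \<longrightarrow> subring Ls R) \<and>                         \<comment> \<open>AP3\<close>
     (\<not> (Phi = C \<or> l = 2) \<longrightarrow> subring Ll R) \<and>                         \<comment> \<open>AP4\<close>
     (\<forall>x\<in>Ll. \<forall>y\<in>Ls. x \<otimes>\<^bsub>R\<^esub> y \<in> Ls)"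

definition perfect_char2 :: "('a, 'b) ring_scheme \<Rightarrow> 'a set \<Rightarrow> bool" where
  "perfect_char2 R K \<longleftrightarrow> (\<forall>a\<in>K. \<exists>b\<in>K. a = b [^]\<^bsub>R\<^esub> (2::nat))"

definition char_two :: "('a, 'b) ring_scheme \<Rightarrow> bool" where
  "char_two R \<longleftrightarrow> \<one>\<^bsub>R\<^esub> \<oplus>\<^bsub>R\<^esub> \<one>\<^bsub>R\<^esub> = \<zero>\<^bsub>R\<^esub>"

end

theory Submission
  imports Defs "HOL-Computational_Algebra.Polynomial" "HOL-Computational_Algebra.Fraction_Field"
    "HOL-Library.Z2" "HOL-Library.Countable"
begin

text \<open>Take \<open>F = \<bbbF>\<^sub>2(x, y, z, w)\<close> and \<open>K = F\<^sup>2\<close>. Then \<open>F\<close> is spanned over \<open>K\<close> by the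
  sixteen monomials in \<open>x, y, z, w\<close> with exponents at most one, and \<open>K\<close> is not perfect,
  because \<open>w\<^sup>2\<close> is not a fourth power. Since all squares lie in \<open>K\<close>, the \<open>K\<close>-spaces
  \<open>Q = K + Kx + Ky\<close> and \<open>P = R + Rz + Rw\<close>, where \<open>R = K + Kx + Ky + Kxy\<close> is the field \<open>K(x, y)\<close>,
  satisfy the admissibility conditions, and so do \<open>(K, P)\<close> and \<open>(Q, F)\<close>. None of \<open>Q\<close>, \<open>P\<close> is a
  ring, as \<open>xy \<notin> Q\<close> and \<open>zw \<notin> P\<close>. Such non-memberships are witnessed by the subfield \<open>E\<^sub>v\<close> of
  \<open>F\<close> obtained by replacing a variable \<open>v\<close> by \<open>v\<^sup>2\<close>: it contains all squares and the other
  variables, but \<open>1\<close> and \<open>v\<close> are linearly independent over it. The pair \<open>(Q, P)\<close> serves for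
  \<open>l = 2\<close>, \<open>(K, P)\<close> for \<open>B\<^sub>l\<close> and \<open>(Q, F)\<close> for \<open>C\<^sub>l\<close>.\<close>

section \<open>Characteristic two\<close>

lemma poly_two_eq_zero: "(2::'a::comm_ring_1) = 0 \<Longrightarrow> (2::'a poly) = 0"
  by (metis of_nat_numeral of_nat_poly pCons_0_0)

lemma fract_two_eq_zero: "(2::'a::idom) = 0 \<Longrightarrow> (2::'a fract) = 0"
  by (metis of_nat_fract of_nat_numeral fract_collapse(1))

lemma add_self_char2: "(2::'a::comm_ring_1) = 0 \<Longrightarrow> a + a = (0::'a)"
  by (metis mult_2 mult_zero_left)

lemma minus_eq_self_char2: "(2::'a::comm_ring_1) = 0 \<Longrightarrow> - a = (a::'a)"
  by (metis add_eq_0_iff add_self_char2)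

lemma power2_add_char2: "(2::'a::comm_ring_1) = 0 \<Longrightarrow> (a + b)^2 = (a::'a)^2 + b^2"
  by (simp add: power2_sum)

lemma eq_if_add_eq_zero_char2: "(2::'a::comm_ring_1) = 0 \<Longrightarrow> a + b = 0 \<Longrightarrow> a = (b::'a)"
  by (metis add_eq_0_iff minus_eq_self_char2)

lemma pCons_eq_const_plus_X_mult: "pCons (a::'a::comm_ring_1) p = [:a:] + [:0,1:] * p"
  by (simp add: mult_pCons_left smult_1_left)

lemma power2_pCons_char2:
  fixes a :: "'a::comm_ring_1"
  assumes "(2::'a) = 0"
  shows "(pCons a p)^2 = pCons (a^2) (pCons 0 (p^2))"
proof -
  have "(pCons a p)^2 = ([:a:] + [:0,1:] * p)^2" by (subst pCons_eq_const_plus_X_mult, rule refl)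
  also have "\<dots> = [:a:]^2 + ([:0,1:] * p)^2" by (rule power2_add_char2[OF poly_two_eq_zero[OF assms]])
  also have "\<dots> = pCons (a^2) (pCons 0 (p^2))" by (simp add: power2_eq_square mult_pCons_left)
  finally show ?thesis .
qed

lemma coeff_power2_char2:
  fixes p :: "'a::comm_ring_1 poly"
  assumes "(2::'a) = 0"
  shows "coeff (p^2) i = (if even i then (coeff p (i div 2))^2 else 0)"
proof (induction p arbitrary: i)
  case (pCons a p)
  show ?case
  proof (cases i)
    case (Suc j)
    then show ?thesis
      using pCons.IH[of "j - 1"] by (cases j) (simp_all add: power2_pCons_char2[OF assms])
  qed (simp add: power2_pCons_char2[OF assms])
qed simp

section \<open>Square subrings and independence\<close>

definition square_subring :: "'a::comm_ring_1 set \<Rightarrow> bool" where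
  "square_subring S \<longleftrightarrow>
     0 \<in> S \<and> 1 \<in> S \<and> (\<forall>a\<in>S. \<forall>b\<in>S. a + b \<in> S \<and> a * b \<in> S) \<and> (\<forall>a. a^2 \<in> S)"

text \<open>In characteristic two, \<open>one_indep z S\<close> says that \<open>1\<close> and \<open>z\<close> are linearly independent
  over the subring \<open>S\<close>.\<close>
definition one_indep :: "'a::comm_ring_1 \<Rightarrow> 'a set \<Rightarrow> bool" where
  "one_indep z S \<longleftrightarrow> (\<forall>e\<in>S. \<forall>e'\<in>S. z * e = e' \<longrightarrow> e = 0)"

lemma square_subringD:
  assumes "square_subring S"
  shows "0 \<in> S" "1 \<in> S" "a \<in> S \<Longrightarrow> b \<in> S \<Longrightarrow> a + b \<in> S" "a \<in> S \<Longrightarrow> b \<in> S \<Longrightarrow> a * b \<in> S"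
    "c^2 \<in> S"
  using assms unfolding square_subring_def by blast+

lemma square_subring_sum:
  assumes "square_subring S" "\<And>i. i \<in> A \<Longrightarrow> g i \<in> S"
  shows "sum g A \<in> S"
  using assms(2)
  by (induction A rule: infinite_finite_induct) (simp_all add: square_subringD[OF assms(1)])

lemma one_indepD: "one_indep z S \<Longrightarrow> e \<in> S \<Longrightarrow> e' \<in> S \<Longrightarrow> z * e = e' \<Longrightarrow> e = 0"
  unfolding one_indep_def by blast

lemma not_mem_if_one_indep:
  assumes "square_subring S" "one_indep (z::'a::comm_ring_1) S"
  shows "z \<notin> S"
proof
  assume "z \<in> S"
  have "z * 1 = z" by simp
  then have "(1::'a) = 0"
    by (rule one_indepD[OF assms(2) square_subringD(2)[OF assms(1)] \<open>z \<in> S\<close>])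
  then show False by simp
qed

section \<open>Rational functions\<close>

definition rconst :: "'a::idom \<Rightarrow> 'a poly fract" where
  "rconst a = Fract [:a:] 1"

definition rvar :: "'a::idom poly fract" where
  "rvar = Fract [:0,1:] 1"

definition rat_funs_over :: "'a::idom set \<Rightarrow> 'a poly fract set" where
  "rat_funs_over S = {Fract p q | p q. (\<forall>i. coeff p i \<in> S) \<and> (\<forall>i. coeff q i \<in> S) \<and> q \<noteq> 0}"

definition even_poly :: "'a::zero poly \<Rightarrow> bool" where
  "even_poly p \<longleftrightarrow> (\<forall>i. odd i \<longrightarrow> coeff p i = 0)"

definition even_rat_funs :: "'a::idom poly fract set" where
  "even_rat_funs = {Fract p q | p q. even_poly p \<and> even_poly q \<and> q \<noteq> 0}"

lemma Fract_in_rat_funs_over: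
  "(\<forall>i. coeff p i \<in> S) \<Longrightarrow> (\<forall>i. coeff q i \<in> S) \<Longrightarrow> q \<noteq> 0 \<Longrightarrow> Fract p q \<in> rat_funs_over S"
  unfolding rat_funs_over_def by blast

lemma Fract_in_even_rat_funs:
  "even_poly p \<Longrightarrow> even_poly q \<Longrightarrow> q \<noteq> 0 \<Longrightarrow> Fract p q \<in> even_rat_funs"
  unfolding even_rat_funs_def by blast

lemma square_subring_coeff_mult:
  assumes "square_subring S" "\<forall>i. coeff p i \<in> S" "\<forall>i. coeff q i \<in> S"
  shows "\<forall>i. coeff (p * q) i \<in> S"
  using assms by (auto simp: coeff_mult square_subringD intro!: square_subring_sum)

lemma square_subring_rat_funs_over:
  fixes S :: "'a::field set"
  assumes char2: "(2::'a) = 0" and S: "square_subring S"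
  shows "square_subring (rat_funs_over S)"
  unfolding square_subring_def
proof (intro conjI ballI allI)
  show "0 \<in> rat_funs_over S" "1 \<in> rat_funs_over S"
    unfolding fract_expand using S
    by (auto intro!: Fract_in_rat_funs_over simp: square_subringD coeff_1)
next
  fix a b assume "a \<in> rat_funs_over S" "b \<in> rat_funs_over S"
  then obtain p q r s where pq: "a = Fract p q" "\<forall>i. coeff p i \<in> S" "\<forall>i. coeff q i \<in> S" "q \<noteq> 0"
    and rs: "b = Fract r s" "\<forall>i. coeff r i \<in> S" "\<forall>i. coeff s i \<in> S" "s \<noteq> 0"
    unfolding rat_funs_over_def by blast
  have "a + b = Fract (p * s + r * q) (q * s)" "a * b = Fract (p * r) (q * s)"
    using pq rs by simp_all
  then show "a + b \<in> rat_funs_over S" "a * b \<in> rat_funs_over S"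
    using pq rs square_subring_coeff_mult[OF S] square_subringD(3)[OF S]
    by (auto intro!: Fract_in_rat_funs_over)
next
  fix a :: "'a poly fract"
  obtain p q where pq: "a = Fract p q" "q \<noteq> 0" by (cases a) auto
  then have "a^2 = Fract (p^2) (q^2)" by (simp add: power2_eq_square)
  then show "a^2 \<in> rat_funs_over S"
    using pq square_subringD(5)[OF S]
    by (auto intro!: Fract_in_rat_funs_over simp: coeff_power2_char2[OF char2] square_subringD(1)[OF S])
qed

lemma rconst_in_rat_funs_over:
  assumes "square_subring S" "a \<in> S"
  shows "rconst a \<in> rat_funs_over S"
  unfolding rconst_def using assms
  by (intro Fract_in_rat_funs_over) (auto simp: square_subringD coeff_pCons coeff_1 split: nat.splits)

text \<open>Clear denominators and compare coefficients.\<close>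
lemma one_indep_rat_funs_over:
  fixes z :: "'a::field"
  assumes S: "square_subring S" and z: "one_indep z S"
  shows "one_indep (rconst z) (rat_funs_over S)"
  unfolding one_indep_def
proof (intro ballI impI)
  fix e e' assume "e \<in> rat_funs_over S" "e' \<in> rat_funs_over S" and eq: "rconst z * e = e'"
  then obtain p q r s where pq: "e = Fract p q" "\<forall>i. coeff p i \<in> S" "\<forall>i. coeff q i \<in> S" "q \<noteq> 0"
    and rs: "e' = Fract r s" "\<forall>i. coeff r i \<in> S" "\<forall>i. coeff s i \<in> S" "s \<noteq> 0"
    unfolding rat_funs_over_def by blast
  have "Fract ([:z:] * p) q = Fract r s" using eq pq rs by (simp add: rconst_def)
  then have cross: "[:z:] * p * s = r * q" using pq rs by (simp add: eq_fract)
  have "coeff (p * s) i = 0" for i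
  proof (rule one_indepD[OF z])
    show "z * coeff (p * s) i = coeff (r * q) i"
      using arg_cong[OF cross, of "\<lambda>u. coeff u i"] by (simp add: mult.assoc)
    show "coeff (p * s) i \<in> S" "coeff (r * q) i \<in> S"
      using square_subring_coeff_mult[OF S] pq rs by auto
  qed
  then have "p * s = 0" by (simp add: poly_eq_iff)
  then have "p = 0" using rs by simp
  then show "e = 0" using pq by (simp add: fract_collapse)
qed

lemma even_poly_add: "even_poly p \<Longrightarrow> even_poly q \<Longrightarrow> even_poly (p + q)"
  by (simp add: even_poly_def)

lemma even_poly_mult:
  assumes "even_poly p" "even_poly (q::'a::comm_semiring_0 poly)"
  shows "even_poly (p * q)"
  unfolding even_poly_def
proof (intro allI impI)
  fix i :: nat assume "odd i"
  have "coeff p j * coeff q (i - j) = 0" if "j \<le> i" for j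
  proof (cases "odd j")
    case False
    then have "odd (i - j)" using \<open>odd i\<close> that by presburger
    then show ?thesis using assms by (simp add: even_poly_def)
  qed (use assms in \<open>simp add: even_poly_def\<close>)
  then show "coeff (p * q) i = 0" by (simp add: coeff_mult)
qed

lemma even_poly_const: "even_poly [:a:]"
  unfolding even_poly_def by (auto simp: coeff_pCons elim: oddE split: nat.split)

lemma even_poly_power2: "(2::'a::comm_ring_1) = 0 \<Longrightarrow> even_poly ((p::'a poly)^2)"
  by (simp add: even_poly_def coeff_power2_char2)

lemma even_degree_if_even_poly: "even_poly p \<Longrightarrow> p \<noteq> 0 \<Longrightarrow> even (degree p)"
  using leading_coeff_neq_0[of p] unfolding even_poly_def by blast

lemma square_subring_even_rat_funs:
  assumes "(2::'a::field) = 0"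
  shows "square_subring (even_rat_funs :: 'a poly fract set)"
  unfolding square_subring_def
proof (intro conjI ballI allI)
  have "even_poly (0::'a poly)" "even_poly (1::'a poly)"
    by (metis even_poly_const pCons_0_0 one_pCons)+
  then show "0 \<in> (even_rat_funs :: 'a poly fract set)" "1 \<in> (even_rat_funs :: 'a poly fract set)"
    unfolding fract_expand by (auto intro!: Fract_in_even_rat_funs)
next
  fix a b :: "'a poly fract" assume "a \<in> even_rat_funs" "b \<in> even_rat_funs"
  then obtain p q r s where pq: "a = Fract p q" "even_poly p" "even_poly q" "q \<noteq> 0"
    and rs: "b = Fract r s" "even_poly r" "even_poly s" "s \<noteq> 0"
    unfolding even_rat_funs_def by blast
  have "a + b = Fract (p * s + r * q) (q * s)" "a * b = Fract (p * r) (q * s)"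
    using pq rs by simp_all
  then show "a + b \<in> even_rat_funs" "a * b \<in> even_rat_funs"
    using pq rs by (auto intro!: Fract_in_even_rat_funs even_poly_add even_poly_mult)
next
  fix a :: "'a poly fract"
  obtain p q where pq: "a = Fract p q" "q \<noteq> 0" by (cases a) auto
  then have "a^2 = Fract (p^2) (q^2)" by (simp add: power2_eq_square)
  then show "a^2 \<in> even_rat_funs"
    using pq by (auto intro!: Fract_in_even_rat_funs even_poly_power2[OF assms])
qed

lemma rconst_in_even_rat_funs: "rconst a \<in> even_rat_funs"
  unfolding rconst_def
  by (rule Fract_in_even_rat_funs) (auto simp: even_poly_const one_pCons simp del: pCons_one)

text \<open>In \<open>t p s = r q\<close> with \<open>p, q, r, s\<close> even and \<open>p, s \<noteq> 0\<close>, the degrees have different parity.\<close>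
lemma one_indep_rvar_even_rat_funs: "one_indep (rvar :: 'a::field poly fract) even_rat_funs"
  unfolding one_indep_def
proof (intro ballI impI)
  fix e e' :: "'a poly fract" assume "e \<in> even_rat_funs" "e' \<in> even_rat_funs" and eq: "rvar * e = e'"
  then obtain p q r s where pq: "e = Fract p q" "even_poly p" "even_poly q" "q \<noteq> 0"
    and rs: "e' = Fract r s" "even_poly r" "even_poly s" "s \<noteq> 0"
    unfolding even_rat_funs_def by blast
  have "Fract ([:0,1:] * p) q = Fract r s" using eq pq rs by (simp add: rvar_def)
  then have cross: "[:0,1:] * p * s = r * q" using pq rs by (simp add: eq_fract)
  show "e = 0"
  proof (rule ccontr)
    assume "e \<noteq> 0"
    then have "p \<noteq> 0" using pq by (auto simp: fract_collapse)
    then have "r \<noteq> 0" using cross rs by auto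
    have "degree ([:0,1:] * p * s) = Suc (degree p + degree s)"
      using \<open>p \<noteq> 0\<close> rs by (simp add: degree_mult_eq)
    moreover have "degree (r * q) = degree r + degree q"
      using \<open>r \<noteq> 0\<close> pq by (simp add: degree_mult_eq)
    moreover have "even (degree p)" "even (degree s)" "even (degree r)" "even (degree q)"
      using even_degree_if_even_poly pq rs \<open>p \<noteq> 0\<close> \<open>r \<noteq> 0\<close> by auto
    moreover have "degree ([:0,1:] * p * s) = degree (r * q)" using cross by (rule arg_cong)
    ultimately show False by presburger
  qed
qed

section \<open>Finite dimension over the squares\<close>

definition square_spanned :: "nat \<Rightarrow> (nat \<Rightarrow> 'a::comm_ring_1) \<Rightarrow> bool" where
  "square_spanned n ms \<longleftrightarrow> (\<forall>t. \<exists>c. t = (\<Sum>i<n. (c i)^2 * ms i))"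

lemma sum_const_poly: "(\<Sum>i\<in>A. [:f i:]) = [:\<Sum>i\<in>A. f i:]"
  by (induction A rule: infinite_finite_induct) auto

text \<open>Every polynomial over \<open>K\<close> is \<open>f(t\<^sup>2) + t g(t\<^sup>2)\<close>, and the coefficients of \<open>f\<close> and \<open>g\<close>
  are combinations of the \<open>ms i\<close> with square coefficients.\<close>
lemma square_spanned_poly:
  fixes ms :: "nat \<Rightarrow> 'a::comm_ring_1"
  assumes char2: "(2::'a) = 0" and spanned: "square_spanned n ms"
  shows "\<exists>R S. p = (\<Sum>i<n. (R i)^2 * [:ms i:]) + [:0,1:] * (\<Sum>i<n. (S i)^2 * [:ms i:])"
proof (induction p)
  case 0
  show ?case by (rule exI[of _ "\<lambda>_. 0"], rule exI[of _ "\<lambda>_. 0"]) simp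
next
  case (pCons a p)
  then obtain R S where RS: "p = (\<Sum>i<n. (R i)^2 * [:ms i:]) + [:0,1:] * (\<Sum>i<n. (S i)^2 * [:ms i:])"
    by blast
  obtain c where c: "a = (\<Sum>i<n. (c i)^2 * ms i)" using spanned unfolding square_spanned_def by blast
  define R' where "R' i = [:c i:] + [:0,1:] * S i" for i
  have "(R' i)^2 * [:ms i:] = [:(c i)^2 * ms i:] + [:0,1:] * ([:0,1:] * ((S i)^2 * [:ms i:]))" for i
    unfolding R'_def power2_add_char2[OF poly_two_eq_zero[OF char2]]
    by (simp add: power2_eq_square algebra_simps)
  then have "(\<Sum>i<n. (R' i)^2 * [:ms i:]) = [:a:] + [:0,1:] * ([:0,1:] * (\<Sum>i<n. (S i)^2 * [:ms i:]))"
    by (simp only: sum.distrib sum_const_poly c flip: sum_distrib_left)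
  then have "(\<Sum>i<n. (R' i)^2 * [:ms i:]) + [:0,1:] * (\<Sum>i<n. (R i)^2 * [:ms i:])
      = [:a:] + [:0,1:] * p"
    unfolding RS by (simp only: distrib_left add_ac)
  then show ?case
    unfolding pCons_eq_const_plus_X_mult[of a p] by (intro exI[of _ R'] exI[of _ R]) (rule sym)
qed

lemma sum_lessThan_add:
  fixes g :: "nat \<Rightarrow> 'b::comm_monoid_add"
  shows "(\<Sum>i<n + m. g i) = (\<Sum>i<n. g i) + (\<Sum>i<m. g (n + i))"
  by (induction m) (auto simp: add_ac)

lemma Fract_sum_1: "Fract (sum f A) 1 = (\<Sum>i\<in>A. Fract (f i) (1::'a::idom))"
proof (induction A rule: infinite_finite_induct)
  case (insert x F)
  have "Fract (f x + sum f F) 1 = Fract (f x) 1 + Fract (sum f F) (1::'a)" by simp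
  with insert show ?case by simp
qed (simp_all add: fract_collapse)

text \<open>Writing \<open>p / q = q\<^sup>-\<^sup>2 (p q)\<close> reduces the claim to \<open>square_spanned_poly\<close> for \<open>p q\<close>.\<close>
lemma square_spanned_rat_funs:
  fixes ms :: "nat \<Rightarrow> 'a::field"
  assumes char2: "(2::'a) = 0" and spanned: "square_spanned n ms"
  shows "square_spanned (2 * n) (\<lambda>i. if i < n then rconst (ms i) else rvar * rconst (ms (i - n)))"
  unfolding square_spanned_def
proof
  fix t :: "'a poly fract"
  obtain p q where pq: "t = Fract p q" "q \<noteq> 0" by (cases t) auto
  obtain R S where RS: "p * q = (\<Sum>i<n. (R i)^2 * [:ms i:]) + [:0,1:] * (\<Sum>i<n. (S i)^2 * [:ms i:])"
    using square_spanned_poly[OF char2 spanned] by blast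
  define c where "c i = (if i < n then Fract (R i) q else Fract (S (i - n)) q)" for i
  have R: "Fract (R i) q ^2 * rconst (ms i) = Fract 1 (q^2) * Fract ((R i)^2 * [:ms i:]) 1" for i
    using pq by (simp add: rconst_def power2_eq_square)
  have S: "Fract (S i) q ^2 * (rvar * rconst (ms i))
      = Fract 1 (q^2) * (Fract [:0,1:] 1 * Fract ((S i)^2 * [:ms i:]) 1)" for i
    using pq by (simp add: rconst_def rvar_def power2_eq_square)
  have "(\<Sum>i<2*n. (c i)^2 * (if i < n then rconst (ms i) else rvar * rconst (ms (i - n))))
      = (\<Sum>i<n. Fract (R i) q ^2 * rconst (ms i)) + (\<Sum>i<n. Fract (S i) q ^2 * (rvar * rconst (ms i)))"
    unfolding mult_2 sum_lessThan_add by (simp add: c_def)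
  also have "\<dots> = Fract 1 (q^2) * (Fract (\<Sum>i<n. (R i)^2 * [:ms i:]) 1
      + Fract [:0,1:] 1 * Fract (\<Sum>i<n. (S i)^2 * [:ms i:]) 1)"
    by (simp only: R S Fract_sum_1 distrib_left sum_distrib_left)
  also have "\<dots> = Fract 1 (q^2) * Fract (p * q) 1"
    unfolding RS by (simp add: fract_collapse)
  also have "\<dots> = t"
    using pq by (simp add: power2_eq_square eq_fract)
  finally show "\<exists>c. t = (\<Sum>i<2*n. (c i)^2 * (if i < n then rconst (ms i) else rvar * rconst (ms (i - n))))"
    by (intro exI[of _ c]) (rule sym)
qed

section \<open>Countable fields as rings on the natural numbers\<close>

instance bit :: countable
  by (rule countable_classI[of "\<lambda>b::bit. if b = 0 then (0::nat) else 1"])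
    (metis bit_not_zero_iff zero_neq_one)

instance poly :: ("{zero,countable}") countable
  by (rule countable_classI[of "\<lambda>p. to_nat (coeffs p)"]) (simp add: coeffs_eq_iff)

instance fract :: ("{idom,countable}") countable
proof (rule countable_classI[of "\<lambda>x. to_nat (SOME pq. x = Fract (fst pq) (snd pq))"])
  fix x y :: "'a fract"
  have ex: "\<exists>pq. z = Fract (fst pq) (snd pq)" for z :: "'a fract"
    by (cases z) auto
  assume "to_nat (SOME pq. x = Fract (fst pq) (snd pq)) = to_nat (SOME pq. y = Fract (fst pq) (snd pq))"
  then have "(SOME pq. x = Fract (fst pq) (snd pq)) = (SOME pq. y = Fract (fst pq) (snd pq))"
    by simp
  then show "x = y" using someI_ex[OF ex[of x]] someI_ex[OF ex[of y]] by metis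
qed

definition nat_field :: "'a::{field,countable} itself \<Rightarrow> nat ring" where
  "nat_field _ = \<lparr>carrier = range (to_nat :: 'a \<Rightarrow> nat),
     monoid.mult = (\<lambda>a b. to_nat (from_nat a * from_nat b :: 'a)),
     one = to_nat (1::'a), ring.zero = to_nat (0::'a),
     add = (\<lambda>a b. to_nat (from_nat a + from_nat b :: 'a))\<rparr>"

lemma nat_field_simps:
  fixes a b :: "'a::{field,countable}"
  shows "carrier (nat_field TYPE('a)) = range (to_nat :: 'a \<Rightarrow> nat)"
    and "to_nat a \<otimes>\<^bsub>nat_field TYPE('a)\<^esub> to_nat b = to_nat (a * b)"
    and "to_nat a \<oplus>\<^bsub>nat_field TYPE('a)\<^esub> to_nat b = to_nat (a + b)"
    and "\<one>\<^bsub>nat_field TYPE('a)\<^esub> = to_nat (1::'a)"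
    and "\<zero>\<^bsub>nat_field TYPE('a)\<^esub> = to_nat (0::'a)"
  by (simp_all add: nat_field_def)

lemma field_nat_field: "field (nat_field TYPE('a::{field,countable}))"
proof -
  have "\<exists>y. x + y = 0" for x :: 'a
    using add.right_inverse by blast
  moreover have "x \<noteq> 0 \<Longrightarrow> \<exists>y. x * y = 1" for x :: 'a
    by (rule exI[of _ "inverse x"]) auto
  ultimately show ?thesis
    unfolding nat_field_def by unfold_locales (auto simp: algebra_simps Units_def image_iff)
qed

lemma to_nat_in_nat_field: "to_nat (a::'a::{field,countable}) \<in> carrier (nat_field TYPE('a))"
  unfolding nat_field_simps(1) by (rule rangeI)

lemma to_nat_in_image_iff: "to_nat (a::'a::countable) \<in> to_nat ` S \<longleftrightarrow> a \<in> S"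
  by (auto dest: injD[OF inj_to_nat])

lemma image_to_nat_subset_nat_field: "to_nat ` (S::'a::{field,countable} set) \<subseteq> carrier (nat_field TYPE('a))"
  unfolding nat_field_simps(1) by blast

lemma nat_field_a_inv: "\<ominus>\<^bsub>nat_field TYPE('a::{field,countable})\<^esub> (to_nat a) = to_nat (- a :: 'a)"
proof -
  interpret field "nat_field TYPE('a)" by (rule field_nat_field)
  show ?thesis
  proof (rule minus_equality)
    show "to_nat (- a) \<oplus>\<^bsub>nat_field TYPE('a)\<^esub> to_nat a = \<zero>\<^bsub>nat_field TYPE('a)\<^esub>"
      by (simp only: nat_field_simps(3,5) left_minus)
  qed (rule to_nat_in_nat_field)+
qed

lemma nat_field_pow: "(to_nat a) [^]\<^bsub>nat_field TYPE('a::{field,countable})\<^esub> (n::nat) = to_nat (a ^ n :: 'a)"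
  by (induction n) (simp_all only: nat_pow_0 nat_pow_Suc nat_field_simps(2,4) power_0 power_Suc2)

lemma nat_field_inv:
  assumes "a \<noteq> 0"
  shows "inv\<^bsub>nat_field TYPE('a::{field,countable})\<^esub> (to_nat a) = to_nat (inverse a :: 'a)"
proof -
  interpret field "nat_field TYPE('a)" by (rule field_nat_field)
  show ?thesis
  proof (rule comm_inv_char[OF to_nat_in_nat_field to_nat_in_nat_field])
    show "to_nat a \<otimes>\<^bsub>nat_field TYPE('a)\<^esub> to_nat (inverse a) = \<one>\<^bsub>nat_field TYPE('a)\<^esub>"
      using assms by (simp only: nat_field_simps(2,4)) simp
  qed
qed

lemma additive_subgroup_nat_field:
  fixes S :: "'a::{field,countable} set"
  assumes "0 \<in> S" "\<And>a b. a \<in> S \<Longrightarrow> b \<in> S \<Longrightarrow> a + b \<in> S" "\<And>a. a \<in> S \<Longrightarrow> - a \<in> S"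
  shows "additive_subgroup (to_nat ` S) (nat_field TYPE('a))"
proof -
  interpret field "nat_field TYPE('a)" by (rule field_nat_field)
  show ?thesis
  proof (intro additive_subgroupI add.subgroupI image_to_nat_subset_nat_field)
    show "to_nat ` S \<noteq> {}" using assms(1) by blast
  next
    fix h assume "h \<in> to_nat ` S"
    then obtain a where "h = to_nat a" "a \<in> S" by blast
    then show "\<ominus>\<^bsub>nat_field TYPE('a)\<^esub> h \<in> to_nat ` S"
      using assms(3) by (simp add: nat_field_a_inv)
  next
    fix h h' assume "h \<in> to_nat ` S" "h' \<in> to_nat ` S"
    then obtain a b where "h = to_nat a" "a \<in> S" "h' = to_nat b" "b \<in> S" by blast
    then show "h \<oplus>\<^bsub>nat_field TYPE('a)\<^esub> h' \<in> to_nat ` S"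
      using assms(2) by (simp add: nat_field_simps(3))
  qed
qed

lemma subring_nat_field:
  fixes S :: "'a::{field,countable} set"
  assumes "1 \<in> S" "\<And>a b. a \<in> S \<Longrightarrow> b \<in> S \<Longrightarrow> a + b \<in> S" "\<And>a. a \<in> S \<Longrightarrow> - a \<in> S"
    "\<And>a b. a \<in> S \<Longrightarrow> b \<in> S \<Longrightarrow> a * b \<in> S"
  shows "subring (to_nat ` S) (nat_field TYPE('a))"
proof -
  interpret field "nat_field TYPE('a)" by (rule field_nat_field)
  show ?thesis
  proof (rule subringI[OF image_to_nat_subset_nat_field])
    show "\<one>\<^bsub>nat_field TYPE('a)\<^esub> \<in> to_nat ` S" unfolding nat_field_simps(4) using assms(1) by blast
  next
    fix h assume "h \<in> to_nat ` S"
    then obtain a where "h = to_nat a" "a \<in> S" by blast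
    then show "\<ominus>\<^bsub>nat_field TYPE('a)\<^esub> h \<in> to_nat ` S"
      using assms(3) by (simp add: nat_field_a_inv)
  next
    fix h h' assume "h \<in> to_nat ` S" "h' \<in> to_nat ` S"
    then obtain a b where "h = to_nat a" "a \<in> S" "h' = to_nat b" "b \<in> S" by blast
    then show "h \<otimes>\<^bsub>nat_field TYPE('a)\<^esub> h' \<in> to_nat ` S" "h \<oplus>\<^bsub>nat_field TYPE('a)\<^esub> h' \<in> to_nat ` S"
      using assms(2,4) by (simp_all add: nat_field_simps(2,3))
  qed
qed

lemma subfield_nat_field:
  fixes S :: "'a::{field,countable} set"
  assumes "1 \<in> S" "\<And>a b. a \<in> S \<Longrightarrow> b \<in> S \<Longrightarrow> a + b \<in> S" "\<And>a. a \<in> S \<Longrightarrow> - a \<in> S"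
    "\<And>a b. a \<in> S \<Longrightarrow> b \<in> S \<Longrightarrow> a * b \<in> S" "\<And>a. a \<in> S \<Longrightarrow> inverse a \<in> S"
  shows "subfield (to_nat ` S) (nat_field TYPE('a))"
proof -
  interpret field "nat_field TYPE('a)" by (rule field_nat_field)
  show ?thesis
  proof (rule subfieldI'[OF subring_nat_field[OF assms(1-4)]])
    fix h assume h: "h \<in> to_nat ` S - {\<zero>\<^bsub>nat_field TYPE('a)\<^esub>}"
    then obtain a where a: "h = to_nat a" "a \<in> S" by blast
    then have "a \<noteq> 0" using h unfolding nat_field_simps(5) by blast
    then show "inv\<^bsub>nat_field TYPE('a)\<^esub> h \<in> to_nat ` S"
      using a assms(5) by (simp add: nat_field_inv)
  qed
qed

lemma not_subring_nat_field:
  fixes S :: "'a::{field,countable} set"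
  assumes "a \<in> S" "b \<in> S" "a * b \<notin> S"
  shows "\<not> subring (to_nat ` S) (nat_field TYPE('a))"
proof
  assume "subring (to_nat ` S) (nat_field TYPE('a))"
  moreover have "to_nat a \<in> to_nat ` S" "to_nat b \<in> to_nat ` S" using assms(1,2) by blast+
  ultimately have "to_nat a \<otimes>\<^bsub>nat_field TYPE('a)\<^esub> to_nat b \<in> to_nat ` S"
    by (rule subringE(6))
  then show False using assms(3) by (simp add: nat_field_simps(2) to_nat_in_image_iff)
qed

lemma combine_nat_field:
  "ring.combine (nat_field TYPE('a::{field,countable})) (map (\<lambda>i. to_nat (a i)) xs)
     (map (\<lambda>i. to_nat (b i)) xs) = to_nat (\<Sum>i\<leftarrow>xs. a i * b i :: 'a)"
proof -
  interpret field "nat_field TYPE('a)" by (rule field_nat_field)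
  show ?thesis
    by (induction xs) (simp_all only: list.map combine.simps nat_field_simps(2,3,5) sum_list.Nil sum_list.Cons)
qed

lemma finite_dimension_nat_field:
  fixes K :: "'a::{field,countable} set" and n :: nat
  assumes K: "subfield (to_nat ` K) (nat_field TYPE('a))"
    and spanned: "\<And>t. \<exists>c. t = (\<Sum>i<n. c i * ms i) \<and> (\<forall>i. c i \<in> K)"
  shows "ring.finite_dimension (nat_field TYPE('a)) (to_nat ` K) (carrier (nat_field TYPE('a)))"
proof -
  interpret field "nat_field TYPE('a)" by (rule field_nat_field)
  define Us where "Us = map (\<lambda>i. to_nat (ms i)) [0..<n]"
  have Us: "set Us \<subseteq> carrier (nat_field TYPE('a))" unfolding Us_def using to_nat_in_nat_field by auto
  have "carrier (nat_field TYPE('a)) \<subseteq> Span (to_nat ` K) Us"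
  proof
    fix x assume "x \<in> carrier (nat_field TYPE('a))"
    then obtain t :: 'a where t: "x = to_nat t" unfolding nat_field_simps(1) by blast
    obtain c where c: "t = (\<Sum>i<n. c i * ms i)" "\<forall>i. c i \<in> K" using spanned by blast
    have "(\<Sum>i\<leftarrow>[0..<n]. c i * ms i) = (\<Sum>i<n. c i * ms i)"
      by (simp add: interv_sum_list_conv_sum_set_nat atLeast0LessThan)
    then have "x = combine (map (\<lambda>i. to_nat (c i)) [0..<n]) Us"
      unfolding Us_def combine_nat_field t c(1) by simp
    moreover have "set (map (\<lambda>i. to_nat (c i)) [0..<n]) \<subseteq> to_nat ` K" using c(2) by auto
    ultimately show "x \<in> Span (to_nat ` K) Us"
      unfolding Span_eq_combine_set[OF K Us] by blast
  qed
  then have "Span (to_nat ` K) Us = carrier (nat_field TYPE('a))"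
    using Span_subgroup_props(1)[OF K Us] by blast
  then show ?thesis using Span_finite_dimension[OF K Us] by simp
qed

lemma char_two_nat_field: "(2::'a::{field,countable}) = 0 \<Longrightarrow> char_two (nat_field TYPE('a))"
  unfolding char_two_def by (simp only: nat_field_simps(3,4,5) one_add_one)

lemma perfect_char2_nat_field:
  fixes K :: "'a::{field,countable} set"
  assumes "perfect_char2 (nat_field TYPE('a)) (to_nat ` K)" "a \<in> K"
  shows "\<exists>b\<in>K. a = b^2"
proof -
  obtain h where "h \<in> to_nat ` K" "to_nat a = h [^]\<^bsub>nat_field TYPE('a)\<^esub> (2::nat)"
    using assms unfolding perfect_char2_def by blast
  then obtain b where "b \<in> K" "to_nat a = to_nat (b^2)" by (auto simp: nat_field_pow)
  then show ?thesis by (auto dest: injD[OF inj_to_nat])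
qed

lemma admissible_pair_nat_field:
  fixes Q P :: "'a::{field,countable} set"
  assumes char2: "(2::'a) = 0"
    and Q: "0 \<in> Q" "\<And>a b. a \<in> Q \<Longrightarrow> b \<in> Q \<Longrightarrow> a + b \<in> Q"
    and P: "0 \<in> P" "\<And>a b. a \<in> P \<Longrightarrow> b \<in> P \<Longrightarrow> a + b \<in> P"
    and "Q \<subseteq> P"
    and square_mult: "\<And>t a. t \<in> P \<Longrightarrow> a \<in> Q \<Longrightarrow> t^2 * a \<in> Q"
    and P_ring: "\<not> (Phi = B \<or> l = 2) \<Longrightarrow> 1 \<in> P \<and> (\<forall>a\<in>P. \<forall>b\<in>P. a * b \<in> P)"
    and Q_ring: "\<not> (Phi = C \<or> l = 2) \<Longrightarrow> 1 \<in> Q \<and> (\<forall>a\<in>Q. \<forall>b\<in>Q. a * b \<in> Q)"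
    and mult: "\<And>a b. a \<in> Q \<Longrightarrow> b \<in> P \<Longrightarrow> a * b \<in> P"
  shows "admissible_pair Phi l (nat_field TYPE('a)) (to_nat ` Q) (to_nat ` P)"
  unfolding admissible_pair_def
proof (intro conjI impI ballI)
  note minus_self = minus_eq_self_char2[OF char2]
  show "additive_subgroup (to_nat ` Q) (nat_field TYPE('a))"
    "additive_subgroup (to_nat ` P) (nat_field TYPE('a))"
    using Q P by (simp_all add: minus_self additive_subgroup_nat_field)
  show "pmult_set (nat_field TYPE('a)) (to_nat ` P) \<subseteq> to_nat ` Q"
    using Q(1) by (auto simp: pmult_set_def nat_field_simps(3) add_self_char2[OF char2])
  show "to_nat ` Q \<subseteq> to_nat ` P" using \<open>Q \<subseteq> P\<close> by blast
  show "(t [^]\<^bsub>nat_field TYPE('a)\<^esub> (2::nat)) \<otimes>\<^bsub>nat_field TYPE('a)\<^esub> x \<in> to_nat ` Q"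
    if "t \<in> to_nat ` P" "x \<in> to_nat ` Q" for t x
    using that square_mult by (auto simp: nat_field_pow nat_field_simps(2))
  show "subring (to_nat ` P) (nat_field TYPE('a))" if "\<not> (Phi = B \<or> l = 2)"
    using P_ring[OF that] P(2) by (intro subring_nat_field) (auto simp: minus_self)
  show "subring (to_nat ` Q) (nat_field TYPE('a))" if "\<not> (Phi = C \<or> l = 2)"
    using Q_ring[OF that] Q(2) by (intro subring_nat_field) (auto simp: minus_self)
  show "x \<otimes>\<^bsub>nat_field TYPE('a)\<^esub> y \<in> to_nat ` P" if "x \<in> to_nat ` Q" "y \<in> to_nat ` P" for x y
    using that mult by (auto simp: nat_field_simps(2))
qed

section \<open>The example\<close>

definition squares :: "'a::comm_ring_1 set" where
  "squares = range (\<lambda>a. a^2)"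

text \<open>With \<open>K\<close> the squares: \<open>Q_set x y = K + Kx + Ky\<close>, \<open>R_set x y = K + Kx + Ky + Kxy\<close> and
  \<open>P_set x y z w = R + Rz + Rw\<close> for \<open>R = R_set x y\<close>.\<close>
definition Q_set :: "'a::comm_ring_1 \<Rightarrow> 'a \<Rightarrow> 'a set" where
  "Q_set x y = {a^2 + b^2 * x + c^2 * y | a b c. True}"

definition R_set :: "'a::comm_ring_1 \<Rightarrow> 'a \<Rightarrow> 'a set" where
  "R_set x y = {a^2 + b^2 * x + c^2 * y + d^2 * (x * y) | a b c d. True}"

definition P_set :: "'a::comm_ring_1 \<Rightarrow> 'a \<Rightarrow> 'a \<Rightarrow> 'a \<Rightarrow> 'a set" where
  "P_set x y z w = {r + s * z + t * w | r s t. r \<in> R_set x y \<and> s \<in> R_set x y \<and> t \<in> R_set x y}"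

lemma square_in_squares: "a^2 \<in> squares"
  unfolding squares_def by blast

lemma zero_in_squares: "0 \<in> squares"
  using square_in_squares[of 0] by simp

lemma one_in_squares: "1 \<in> squares"
  using square_in_squares[of 1] by simp

lemma squares_add:
  assumes "(2::'a::comm_ring_1) = 0" "a \<in> squares" "b \<in> squares"
  shows "a + b \<in> (squares :: 'a set)"
proof -
  obtain c d where "a = c^2" "b = d^2" using assms(2,3) unfolding squares_def by blast
  then have "a + b = (c + d)^2" by (simp add: power2_add_char2[OF assms(1)])
  then show ?thesis by (simp add: square_in_squares)
qed

lemma squares_mult: "a \<in> squares \<Longrightarrow> b \<in> squares \<Longrightarrow> a * b \<in> squares"
  unfolding squares_def by (auto simp flip: power_mult_distrib)

lemma squares_inverse: "a \<in> squares \<Longrightarrow> inverse a \<in> (squares :: 'a::field set)"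
  unfolding squares_def by (auto simp flip: power_inverse)

context
  fixes x y z w :: "'a::field"
  assumes char2: "(2::'a) = 0"
begin

lemma squares_subset_Q_set: "squares \<subseteq> Q_set x y"
proof
  fix u :: 'a assume "u \<in> squares"
  then obtain a where "u = a^2 + 0^2 * x + 0^2 * y" unfolding squares_def by auto
  then show "u \<in> Q_set x y" unfolding Q_set_def by blast
qed

lemma Q_set_subset_R_set: "Q_set x y \<subseteq> R_set x y"
proof
  fix u assume "u \<in> Q_set x y"
  then obtain a b c where "u = a^2 + b^2 * x + c^2 * y + 0^2 * (x * y)" unfolding Q_set_def by auto
  then show "u \<in> R_set x y" unfolding R_set_def by blast
qed

lemma R_set_subset_P_set: "R_set x y \<subseteq> P_set x y z w"
proof
  fix u assume "u \<in> R_set x y"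
  moreover have "0 \<in> R_set x y" using Q_set_subset_R_set squares_subset_Q_set zero_in_squares by auto
  moreover have "u = u + 0 * z + 0 * w" by simp
  ultimately show "u \<in> P_set x y z w" unfolding P_set_def by blast
qed

lemma mem_Q_set: "x \<in> Q_set x y" "y \<in> Q_set x y"
proof -
  have "x = 0^2 + 1^2 * x + 0^2 * y" "y = 0^2 + 0^2 * x + 1^2 * y" by simp_all
  then show "x \<in> Q_set x y" "y \<in> Q_set x y" unfolding Q_set_def by blast+
qed

lemma mem_P_set: "z \<in> P_set x y z w" "w \<in> P_set x y z w"
proof -
  have "0 \<in> R_set x y" "1 \<in> R_set x y"
    using Q_set_subset_R_set squares_subset_Q_set zero_in_squares one_in_squares by auto
  moreover have "z = 0 + 1 * z + 0 * w" "w = 0 + 0 * z + 1 * w" by simp_all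
  ultimately show "z \<in> P_set x y z w" "w \<in> P_set x y z w" unfolding P_set_def by blast+
qed

lemma Q_set_add: "u \<in> Q_set x y \<Longrightarrow> v \<in> Q_set x y \<Longrightarrow> u + v \<in> Q_set x y"
proof -
  assume "u \<in> Q_set x y" "v \<in> Q_set x y"
  then obtain a b c a' b' c' where "u = a^2 + b^2 * x + c^2 * y" "v = a'^2 + b'^2 * x + c'^2 * y"
    unfolding Q_set_def by blast
  then have "u + v = (a + a')^2 + (b + b')^2 * x + (c + c')^2 * y"
    by (simp add: power2_add_char2[OF char2] algebra_simps)
  then show ?thesis unfolding Q_set_def by blast
qed

lemma Q_set_square_mult: "v \<in> Q_set x y \<Longrightarrow> t^2 * v \<in> Q_set x y"
proof -
  assume "v \<in> Q_set x y"
  then obtain a b c where "v = a^2 + b^2 * x + c^2 * y" unfolding Q_set_def by blast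
  then have "t^2 * v = (t * a)^2 + (t * b)^2 * x + (t * c)^2 * y"
    by (simp add: algebra_simps power_mult_distrib)
  then show ?thesis unfolding Q_set_def by blast
qed

lemma R_set_add: "u \<in> R_set x y \<Longrightarrow> v \<in> R_set x y \<Longrightarrow> u + v \<in> R_set x y"
proof -
  assume "u \<in> R_set x y" "v \<in> R_set x y"
  then obtain a b c d a' b' c' d' where
    "u = a^2 + b^2 * x + c^2 * y + d^2 * (x * y)" "v = a'^2 + b'^2 * x + c'^2 * y + d'^2 * (x * y)"
    unfolding R_set_def by blast
  then have "u + v = (a + a')^2 + (b + b')^2 * x + (c + c')^2 * y + (d + d')^2 * (x * y)"
    by (simp add: power2_add_char2[OF char2] algebra_simps)
  then show ?thesis unfolding R_set_def by blast
qed

lemma R_set_mult: "u \<in> R_set x y \<Longrightarrow> v \<in> R_set x y \<Longrightarrow> u * v \<in> R_set x y"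
proof -
  assume "u \<in> R_set x y" "v \<in> R_set x y"
  then obtain a b c d e f g h where
    "u = a^2 + b^2 * x + c^2 * y + d^2 * (x * y)" "v = e^2 + f^2 * x + g^2 * y + h^2 * (x * y)"
    unfolding R_set_def by blast
  then have "u * v = (a*e + b*f*x + c*g*y + d*h*(x*y))^2 + (a*f + b*e + c*h*y + d*g*y)^2 * x
     + (a*g + c*e + b*h*x + d*f*x)^2 * y + (a*h + b*g + c*f + d*e)^2 * (x * y)"
    unfolding power2_add_char2[OF char2] power_mult_distrib by (simp add: algebra_simps power2_eq_square)
  then show ?thesis unfolding R_set_def by blast
qed

lemma P_set_add: "u \<in> P_set x y z w \<Longrightarrow> v \<in> P_set x y z w \<Longrightarrow> u + v \<in> P_set x y z w"
proof -
  assume "u \<in> P_set x y z w" "v \<in> P_set x y z w"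
  then obtain r s t r' s' t' where u: "u = r + s * z + t * w" "r \<in> R_set x y" "s \<in> R_set x y" "t \<in> R_set x y"
    and v: "v = r' + s' * z + t' * w" "r' \<in> R_set x y" "s' \<in> R_set x y" "t' \<in> R_set x y"
    unfolding P_set_def by blast
  have "u + v = (r + r') + (s + s') * z + (t + t') * w" unfolding u v by (simp add: algebra_simps)
  then show ?thesis unfolding P_set_def using u v R_set_add by blast
qed

lemma P_set_R_set_mult: "k \<in> R_set x y \<Longrightarrow> v \<in> P_set x y z w \<Longrightarrow> k * v \<in> P_set x y z w"
proof -
  assume k: "k \<in> R_set x y" and "v \<in> P_set x y z w"
  then obtain r s t where v: "v = r + s * z + t * w" "r \<in> R_set x y" "s \<in> R_set x y" "t \<in> R_set x y"
    unfolding P_set_def by blast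
  have "k * v = k * r + (k * s) * z + (k * t) * w" unfolding v by (simp add: algebra_simps)
  then show ?thesis unfolding P_set_def using v k R_set_mult by blast
qed

lemma R_set_subset_square_subring:
  assumes "square_subring E" "x \<in> E" "y \<in> E"
  shows "R_set x y \<subseteq> E"
  using assms by (auto simp: R_set_def square_subringD)

end

text \<open>For each variable \<open>v\<close>, \<open>E\<^sub>v\<close> stands for the subfield of \<open>F\<close> in which \<open>v\<close> is replaced by
  \<open>v\<^sup>2\<close>; only the memberships needed below are assumed.\<close>
locale four_variable_field =
  fixes x y z w :: "'a::{field,countable}" and Ex Ey Ez Ew :: "'a set"
  assumes char2: "(2::'a) = 0"
    and square_subrings: "square_subring Ex" "square_subring Ey" "square_subring Ez" "square_subring Ew"
    and indep: "one_indep x Ex" "one_indep y Ey" "one_indep z Ez" "one_indep w Ew"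
    and mem: "x \<in> Ey" "x \<in> Ez" "y \<in> Ez" "x \<in> Ew" "y \<in> Ew" "z \<in> Ew"
    and finite_over_squares: "\<exists>n ms. square_spanned n (ms :: nat \<Rightarrow> 'a)"
begin

text \<open>From \<open>xy = a\<^sup>2 + b\<^sup>2x + c\<^sup>2y\<close> follows \<open>y(x + c\<^sup>2) = a\<^sup>2 + b\<^sup>2x\<close>, so \<open>x = c\<^sup>2\<close>.\<close>
lemma mult_not_in_Q_set: "x * y \<notin> Q_set x y"
proof
  assume "x * y \<in> Q_set x y"
  then obtain a b c where xy: "x * y = a^2 + b^2 * x + c^2 * y" unfolding Q_set_def by blast
  have "y * (x + c^2) = x * y + c^2 * y" by (simp add: algebra_simps)
  also have "\<dots> = a^2 + b^2 * x + (c^2 * y + c^2 * y)" unfolding xy by (simp add: algebra_simps)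
  also have "\<dots> = a^2 + b^2 * x" by (simp add: add_self_char2[OF char2])
  finally have "y * (x + c^2) = a^2 + b^2 * x" .
  moreover have "x + c^2 \<in> Ey" "a^2 + b^2 * x \<in> Ey"
    using mem(1) by (simp_all add: square_subringD[OF square_subrings(2)])
  ultimately have "x + c^2 = 0" by (rule one_indepD[OF indep(2), rotated 2])
  then have "x = c^2" by (rule eq_if_add_eq_zero_char2[OF char2])
  then show False
    using not_mem_if_one_indep[OF square_subrings(1) indep(1)] square_subringD(5)[OF square_subrings(1)]
    by simp
qed

text \<open>The same argument, with \<open>R = K(x, y)\<close> in place of \<open>K\<close>.\<close>
lemma mult_not_in_P_set: "z * w \<notin> P_set x y z w"
proof
  assume "z * w \<in> P_set x y z w"
  then obtain r s t where zw: "z * w = r + s * z + t * w" and rst: "r \<in> R_set x y" "s \<in> R_set x y" "t \<in> R_set x y"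
    unfolding P_set_def by blast
  have "w * (z + t) = z * w + t * w" by (simp add: algebra_simps)
  also have "\<dots> = r + s * z + (t * w + t * w)" unfolding zw by (simp add: algebra_simps)
  also have "\<dots> = r + s * z" by (simp add: add_self_char2[OF char2])
  finally have "w * (z + t) = r + s * z" .
  moreover have "r \<in> Ew" "s \<in> Ew" "t \<in> Ew"
    using rst R_set_subset_square_subring[OF char2 square_subrings(4) mem(4,5)] by blast+
  then have "z + t \<in> Ew" "r + s * z \<in> Ew"
    using mem(6) by (simp_all add: square_subringD[OF square_subrings(4)])
  ultimately have "z + t = 0" by (rule one_indepD[OF indep(4), rotated 2])
  then have "z = t" by (rule eq_if_add_eq_zero_char2[OF char2])
  moreover have "t \<in> Ez" using rst R_set_subset_square_subring[OF char2 square_subrings(3) mem(2,3)] by blast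
  ultimately show False using not_mem_if_one_indep[OF square_subrings(3) indep(3)] by simp
qed

text \<open>\<open>w\<^sup>2 = s\<^sup>4\<close> would give \<open>(w + s\<^sup>2)\<^sup>2 = 0\<close>, that is \<open>w = s\<^sup>2 \<in> E\<^sub>w\<close>.\<close>
lemma square_not_fourth_power: "w^2 \<noteq> (s^2)^2"
proof
  assume "w^2 = (s^2)^2"
  then have "(w + s^2)^2 = 0" by (simp add: power2_add_char2[OF char2] add_self_char2[OF char2])
  then have "w = s^2" by (simp add: eq_if_add_eq_zero_char2[OF char2])
  then show False
    using not_mem_if_one_indep[OF square_subrings(4) indep(4)] square_subringD(5)[OF square_subrings(4)]
    by simp
qed

lemma subfield_squares: "subfield (to_nat ` (squares :: 'a set)) (nat_field TYPE('a))"
  by (intro subfield_nat_field)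
    (simp_all add: one_in_squares squares_add[OF char2] squares_mult squares_inverse
      minus_eq_self_char2[OF char2])

lemma finite_dimension_over_squares: "ring.finite_dimension (nat_field TYPE('a)) (to_nat ` (squares :: 'a set)) (carrier (nat_field TYPE('a)))"
proof -
  obtain n and ms :: "nat \<Rightarrow> 'a" where spanned: "square_spanned n ms"
    using finite_over_squares by blast
  have "\<exists>c. t = (\<Sum>i<n. c i * ms i) \<and> (\<forall>i. c i \<in> squares)" for t
  proof -
    obtain c where "t = (\<Sum>i<n. (c i)^2 * ms i)" using spanned unfolding square_spanned_def by blast
    then show ?thesis by (intro exI[of _ "\<lambda>i. (c i)^2"]) (simp add: square_in_squares)
  qed
  then show ?thesis by (rule finite_dimension_nat_field[OF subfield_squares])
qed

lemma not_perfect_squares: "\<not> perfect_char2 (nat_field TYPE('a)) (to_nat ` (squares :: 'a set))"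
proof
  assume "perfect_char2 (nat_field TYPE('a)) (to_nat ` (squares :: 'a set))"
  then obtain b where "b \<in> squares" "w^2 = b^2"
    using perfect_char2_nat_field square_in_squares by blast
  moreover from \<open>b \<in> squares\<close> obtain s where "b = s^2" unfolding squares_def by blast
  ultimately show False using square_not_fourth_power[of s] by simp
qed

lemma admissible_Q_set_P_set:
  "admissible_pair Phi 2 (nat_field TYPE('a)) (to_nat ` Q_set x y) (to_nat ` P_set x y z w)"
proof (rule admissible_pair_nat_field[OF char2])
  have "squares \<subseteq> Q_set x y" "Q_set x y \<subseteq> P_set x y z w"
    using squares_subset_Q_set[OF char2] Q_set_subset_R_set[OF char2] R_set_subset_P_set[OF char2]
    by blast+
  then show "0 \<in> Q_set x y" "0 \<in> P_set x y z w" "Q_set x y \<subseteq> P_set x y z w"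
    using zero_in_squares by auto
  show "a * b \<in> P_set x y z w" if "a \<in> Q_set x y" "b \<in> P_set x y z w" for a b
    using that P_set_R_set_mult[OF char2] Q_set_subset_R_set[OF char2] by blast
qed (simp_all add: Q_set_add[OF char2] Q_set_square_mult[OF char2] P_set_add[OF char2])

lemma admissible_squares_P_set:
  "admissible_pair B l (nat_field TYPE('a)) (to_nat ` (squares :: 'a set)) (to_nat ` P_set x y z w)"
proof (rule admissible_pair_nat_field[OF char2])
  have "squares \<subseteq> R_set x y" "R_set x y \<subseteq> P_set x y z w"
    using squares_subset_Q_set[OF char2] Q_set_subset_R_set[OF char2] R_set_subset_P_set[OF char2]
    by blast+
  then show "0 \<in> squares" "0 \<in> P_set x y z w" "squares \<subseteq> P_set x y z w"
    using zero_in_squares by auto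
  show "a * b \<in> P_set x y z w" if "a \<in> squares" "b \<in> P_set x y z w" for a b
    using that P_set_R_set_mult[OF char2] \<open>squares \<subseteq> R_set x y\<close> by blast
  show "1 \<in> squares \<and> (\<forall>a\<in>squares. \<forall>b\<in>squares. a * b \<in> (squares :: 'a set))"
    using one_in_squares squares_mult by blast
qed (simp_all add: squares_add[OF char2] squares_mult square_in_squares P_set_add[OF char2])

lemma admissible_Q_set_UNIV:
  "admissible_pair C l (nat_field TYPE('a)) (to_nat ` Q_set x y) (to_nat ` (UNIV :: 'a set))"
proof (rule admissible_pair_nat_field[OF char2])
  show "0 \<in> Q_set x y"
    using squares_subset_Q_set[OF char2] zero_in_squares by auto
qed (simp_all add: Q_set_add[OF char2] Q_set_square_mult[OF char2])

lemma exists_nonfield_admissible_pair: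
  assumes "l \<ge> 2"
  shows "\<exists>(F :: nat ring) K Q P.
     field F \<and> char_two F \<and> subfield K F \<and>
     ring.finite_dimension F K (carrier F) \<and> \<not> perfect_char2 F K \<and>
     admissible_pair Phi l F Q P \<and>
     K \<subseteq> Q \<and> Q \<subseteq> P \<and> P \<subseteq> carrier F \<and>
     (Phi = B \<and> l \<ge> 3 \<longrightarrow> \<not> subfield P F) \<and>
     (Phi = C \<and> l \<ge> 3 \<longrightarrow> \<not> subfield Q F) \<and>
     (l = 2 \<longrightarrow> \<not> subfield P F \<and> \<not> subfield Q F)"
proof -
  have K_Q: "squares \<subseteq> Q_set x y" and Q_P: "Q_set x y \<subseteq> P_set x y z w"
    using squares_subset_Q_set[OF char2] Q_set_subset_R_set[OF char2] R_set_subset_P_set[OF char2]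
    by blast+
  have Q_not_field: "\<not> subfield (to_nat ` Q_set x y) (nat_field TYPE('a))"
    using not_subring_nat_field[OF mem_Q_set[OF char2] mult_not_in_Q_set] subfieldE(1) by blast
  have P_not_field: "\<not> subfield (to_nat ` P_set x y z w) (nat_field TYPE('a))"
    using not_subring_nat_field[OF mem_P_set[OF char2] mult_not_in_P_set] subfieldE(1) by blast
  note base = field_nat_field char_two_nat_field[OF char2] subfield_squares
    finite_dimension_over_squares not_perfect_squares image_to_nat_subset_nat_field
  consider "l = 2" | "l \<ge> 3" "Phi = B" | "l \<ge> 3" "Phi = C"
    using assms by (cases Phi) force+
  then show ?thesis
  proof cases
    case 1
    then show ?thesis using base admissible_Q_set_P_set K_Q Q_P Q_not_field P_not_field
      by (intro exI[of _ "nat_field TYPE('a)"] exI[of _ "to_nat ` (squares :: 'a set)"] exI[of _ "to_nat ` Q_set x y"] exI[of _ "to_nat ` P_set x y z w"])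
        (auto intro: image_mono)
  next
    case 2
    then show ?thesis using base admissible_squares_P_set K_Q Q_P P_not_field
      by (intro exI[of _ "nat_field TYPE('a)"] exI[of _ "to_nat ` (squares :: 'a set)"] exI[of _ "to_nat ` (squares :: 'a set)"] exI[of _ "to_nat ` P_set x y z w"])
        (auto intro: image_mono)
  next
    case 3
    then show ?thesis using base admissible_Q_set_UNIV K_Q Q_not_field
      by (intro exI[of _ "nat_field TYPE('a)"] exI[of _ "to_nat ` (squares :: 'a set)"] exI[of _ "to_nat ` Q_set x y"] exI[of _ "to_nat ` (UNIV :: 'a set)"])
        (auto intro: image_mono)
  qed
qed

end

type_synonym f2x = "bit poly fract"
type_synonym f2xy = "f2x poly fract"
type_synonym f2xyz = "f2xy poly fract"
type_synonym f2xyzw = "f2xyz poly fract"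

definition var_x :: f2xyzw where "var_x = rconst (rconst (rconst rvar))"
definition var_y :: f2xyzw where "var_y = rconst (rconst rvar)"
definition var_z :: f2xyzw where "var_z = rconst rvar"
definition var_w :: f2xyzw where "var_w = rvar"

lemma two_eq_zero_tower: "(2::bit) = 0" "(2::f2x) = 0" "(2::f2xy) = 0" "(2::f2xyz) = 0" "(2::f2xyzw) = 0"
proof -
  show "(2::bit) = 0" by simp
  then show "(2::f2x) = 0" by (rule fract_two_eq_zero[OF poly_two_eq_zero])
  then show "(2::f2xy) = 0" by (rule fract_two_eq_zero[OF poly_two_eq_zero])
  then show "(2::f2xyz) = 0" by (rule fract_two_eq_zero[OF poly_two_eq_zero])
  then show "(2::f2xyzw) = 0" by (rule fract_two_eq_zero[OF poly_two_eq_zero])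
qed

lemma square_spanned_bit: "square_spanned 1 (\<lambda>_. 1::bit)"
  unfolding square_spanned_def
proof
  fix t :: bit
  have "t = 0 \<or> t = 1" by (metis bit_not_zero_iff)
  then have idem: "t^2 = t" by (elim disjE) simp_all
  show "\<exists>c. t = (\<Sum>i<(1::nat). (c i)^2 * 1)"
    by (intro exI[of _ "\<lambda>_. t"]) (simp only: idem lessThan_Suc lessThan_0 One_nat_def sum.insert
      sum.empty finite.emptyI empty_iff not_False_eq_True add_0_right mult_1_right)
qed

lemma four_variable_field_f2xyzw:
  "four_variable_field var_x var_y var_z var_w
     (rat_funs_over (rat_funs_over (rat_funs_over (even_rat_funs :: f2x set))))
     (rat_funs_over (rat_funs_over (even_rat_funs :: f2xy set)))
     (rat_funs_over (even_rat_funs :: f2xyz set))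
     (even_rat_funs :: f2xyzw set)"
proof -
  note lift = square_subring_rat_funs_over[OF two_eq_zero_tower(2)]
    square_subring_rat_funs_over[OF two_eq_zero_tower(3)]
    square_subring_rat_funs_over[OF two_eq_zero_tower(4)]
  note even = square_subring_even_rat_funs[OF two_eq_zero_tower(1)]
    square_subring_even_rat_funs[OF two_eq_zero_tower(2)]
    square_subring_even_rat_funs[OF two_eq_zero_tower(3)]
    square_subring_even_rat_funs[OF two_eq_zero_tower(4)]
  note indep_lift = one_indep_rat_funs_over
  note const = rconst_in_rat_funs_over
  show ?thesis
  proof
    show "(2::f2xyzw) = 0" by (rule two_eq_zero_tower(5))
    show "square_subring (rat_funs_over (rat_funs_over (rat_funs_over (even_rat_funs :: f2x set))))"
      "square_subring (rat_funs_over (rat_funs_over (even_rat_funs :: f2xy set)))"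
      "square_subring (rat_funs_over (even_rat_funs :: f2xyz set))"
      "square_subring (even_rat_funs :: f2xyzw set)"
      by (intro lift even)+
    show "one_indep var_x (rat_funs_over (rat_funs_over (rat_funs_over (even_rat_funs :: f2x set))))"
      unfolding var_x_def by (intro indep_lift lift even one_indep_rvar_even_rat_funs)+
    show "one_indep var_y (rat_funs_over (rat_funs_over (even_rat_funs :: f2xy set)))"
      unfolding var_y_def by (intro indep_lift lift even one_indep_rvar_even_rat_funs)+
    show "one_indep var_z (rat_funs_over (even_rat_funs :: f2xyz set))"
      unfolding var_z_def by (intro indep_lift lift even one_indep_rvar_even_rat_funs)+
    show "one_indep var_w (even_rat_funs :: f2xyzw set)"
      unfolding var_w_def by (rule one_indep_rvar_even_rat_funs)
    show "var_x \<in> rat_funs_over (rat_funs_over (even_rat_funs :: f2xy set))"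
      unfolding var_x_def by (intro const lift even rconst_in_even_rat_funs)+
    show "var_x \<in> rat_funs_over (even_rat_funs :: f2xyz set)" "var_y \<in> rat_funs_over (even_rat_funs :: f2xyz set)"
      unfolding var_x_def var_y_def by (intro const even rconst_in_even_rat_funs)+
    show "var_x \<in> (even_rat_funs :: f2xyzw set)" "var_y \<in> (even_rat_funs :: f2xyzw set)"
      "var_z \<in> (even_rat_funs :: f2xyzw set)"
      unfolding var_x_def var_y_def var_z_def by (rule rconst_in_even_rat_funs)+
    show "\<exists>n ms. square_spanned n (ms :: nat \<Rightarrow> f2xyzw)"
      using square_spanned_rat_funs[OF two_eq_zero_tower(4) square_spanned_rat_funs[OF two_eq_zero_tower(3)
        square_spanned_rat_funs[OF two_eq_zero_tower(2) square_spanned_rat_funs[OF two_eq_zero_tower(1)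
        square_spanned_bit]]]]
      by blast
  qed
qed

theorem proposition7p1:
  fixes Phi :: root_type and l :: nat
  assumes "l \<ge> 2"
  shows "\<exists>(F :: nat ring) K Q P.
     field F \<and> char_two F \<and> subfield K F \<and>
     ring.finite_dimension F K (carrier F) \<and> \<not> perfect_char2 F K \<and>
     admissible_pair Phi l F Q P \<and>
     K \<subseteq> Q \<and> Q \<subseteq> P \<and> P \<subseteq> carrier F \<and>
     (Phi = B \<and> l \<ge> 3 \<longrightarrow> \<not> subfield P F) \<and>
     (Phi = C \<and> l \<ge> 3 \<longrightarrow> \<not> subfield Q F) \<and>
     (l = 2 \<longrightarrow> \<not> subfield P F \<and> \<not> subfield Q F)"
  by (rule four_variable_field.exists_nonfield_admissible_pair[OF four_variable_field_f2xyzw assms])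

end
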